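(* Let $p\ge3$ and $h=\lfloor p/2\rfloor$. Let $m,s,n,j$ be integers and $B$ a real number. If $0\le m<n$, $0\le s<n$, $h+2<B$, and $l_\Gamma(t^{-m}a^jt^s)>Bn$, then $|j|>p^{(\frac{1}{h+2}B-2)n}$.
   Context: $G=BS(1,p)=\langle a,t\mid tat^{-1}=a^p\rangle$ with generating set $\{a^{\pm1},t^{\pm1}\}$; for a word $v$, $l_\Gamma(v)$ denotes the word length (length of a geodesic representative in the Cayley graph) of the element of $G$ represented by $v$. *)

theory Defs
  imports Complex_Main
begin

text \<open>Generators a, a^-1, t, t^-1 of BS(1,p) = < a, t | t a t^-1 = a^p >.\<close>
datatype gen = A | Ai | T | Ti

fun ginv :: "gen \<Rightarrow> gen" where
  "ginv A = Ai" | "ginv Ai = A" | "ginv T = Ti" | "ginv Ti = T"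

inductive bs_eq :: "nat \<Rightarrow> gen list \<Rightarrow> gen list \<Rightarrow> bool" for p where
  bs_refl: "bs_eq p w w"
| bs_sym: "bs_eq p u v \<Longrightarrow> bs_eq p v u"
| bs_trans: "bs_eq p u v \<Longrightarrow> bs_eq p v w \<Longrightarrow> bs_eq p u w"
| bs_free: "bs_eq p (u @ [x, ginv x] @ v) (u @ v)"
| bs_rel: "bs_eq p (u @ [T, A, Ti] @ v) (u @ replicate p A @ v)"

text \<open>Word length l_Gamma of the element represented by w (generating set {a^\<pm>1, t^\<pm>1}).\<close>
definition wlen :: "nat \<Rightarrow> gen list \<Rightarrow> nat" where
  "wlen p w = (LEAST n. \<exists>u. length u = n \<and> bs_eq p u w)"

definition apow :: "int \<Rightarrow> gen list" where
  "apow j = (if 0 \<le> j then replicate (nat j) A else replicate (nat (- j)) Ai)"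

end

theory Submission
  imports Defs
begin

text \<open>Expanding \<open>j\<close> in base \<open>p\<close> with balanced digits
  \<open>|d| \<le> h\<close>, the identity \<open>a\<^sup>j = t a\<^sup>q t\<^sup>-\<^sup>1 a\<^sup>d\<close> with \<open>j = p q + d\<close> shows that
  \<open>|j| \<le> p\<^sup>k\<close> forces \<open>l(a\<^sup>j) \<le> (h + 2) k + h\<close>. So if \<open>|j| \<le> p\<^sup>x\<^sup>n\<close> with
  \<open>x = B/(h+2) - 2\<close>, then taking \<open>k = \<lceil>x n\<rceil>\<close> the word \<open>t\<^sup>-\<^sup>m a\<^sup>j t\<^sup>s\<close> has length at
  most \<open>2 (n - 1) + (h + 2) k + h \<le> B n\<close>.\<close>

declare bs_trans [trans]

lemma bs_eq_append:
  assumes "bs_eq p u u'" and "bs_eq p v v'"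
  shows "bs_eq p (u @ v) (u' @ v')"
proof -
  have cong: "bs_eq p (x @ u @ y) (x @ v @ y)" if "bs_eq p u v" for x y u v
    using that
  proof (induction rule: bs_eq.induct)
    case (bs_free u a v)
    then show ?case using bs_eq.bs_free[of p "x @ u" a "v @ y"] by simp
  next
    case (bs_rel u v)
    then show ?case using bs_eq.bs_rel[of p "x @ u" "v @ y"] by simp
  qed (blast intro: bs_eq.intros)+
  show ?thesis
    using cong[OF assms(1), of "[]" v] cong[OF assms(2), of u' "[]"] by (auto intro: bs_trans)
qed

lemma bs_eq_replicate_cancel:
  "bs_eq p (replicate n x @ replicate k (ginv x)) (replicate (n - k) x @ replicate (k - n) (ginv x))"
proof (induction n arbitrary: k)
  case 0
  then show ?case by (simp add: bs_refl)
next
  case (Suc n)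
  show ?case
  proof (cases k)
    case 0
    then show ?thesis by (simp add: bs_refl)
  next
    case (Suc k')
    then have "replicate (Suc n) x @ replicate k (ginv x) = replicate n x @ [x, ginv x] @ replicate k' (ginv x)"
      by (simp add: replicate_append_same[symmetric])
    then show ?thesis
      using bs_free[of p "replicate n x" x "replicate k' (ginv x)"] Suc.IH[of k'] Suc
      by (auto intro: bs_trans)
  qed
qed

lemma bs_eq_conj_replicate:
  assumes "bs_eq p [T, x, Ti] (replicate p x)"
  shows "bs_eq p (T # replicate q x @ [Ti]) (replicate (p * q) x)"
proof (induction q)
  case 0
  then show ?case using bs_free[of p "[]" T "[]"] by simp
next
  case (Suc q)
  have "bs_eq p (T # replicate (Suc q) x @ [Ti]) ([T, x, Ti] @ (T # replicate q x @ [Ti]))"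
    using bs_free[of p "[T, x]" Ti "replicate q x @ [Ti]"] by (simp add: bs_sym)
  also have "bs_eq p \<dots> (replicate p x @ replicate (p * q) x)"
    using assms Suc.IH by (rule bs_eq_append)
  also have "replicate p x @ replicate (p * q) x = replicate (p * Suc q) x"
    by (simp add: replicate_add[symmetric])
  finally show ?case .
qed

lemma bs_eq_T_Ai_Ti: "bs_eq p [T, Ai, Ti] (replicate p Ai)"
proof -
  have "bs_eq p [T, Ai, Ti] ([T, Ai, Ti] @ replicate p A @ replicate p Ai)"
    using bs_sym[OF bs_eq_append[OF bs_refl[of p "[T, Ai, Ti]"] bs_eq_replicate_cancel[of p p A p]]]
    by simp
  also have "bs_eq p \<dots> ([T, Ai, Ti] @ [T, A, Ti] @ replicate p Ai)"
    using bs_rel[of p "[T, Ai, Ti]" "replicate p Ai"] by (rule bs_sym)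
  also have "bs_eq p \<dots> ([T, Ai] @ [A, Ti] @ replicate p Ai)"
    using bs_free[of p "[T, Ai]" Ti "[A, Ti] @ replicate p Ai"] by simp
  also have "bs_eq p \<dots> ([T] @ [Ti] @ replicate p Ai)"
    using bs_free[of p "[T]" Ai "[Ti] @ replicate p Ai"] by simp
  also have "bs_eq p \<dots> (replicate p Ai)"
    using bs_free[of p "[]" T "replicate p Ai"] by simp
  finally show ?thesis .
qed

lemma length_apow: "length (apow j) = nat \<bar>j\<bar>"
  by (simp add: apow_def)

lemma apow_eq_replicate: "apow j = replicate (nat j) A @ replicate (nat (- j)) Ai"
  by (simp add: apow_def)

lemma bs_eq_apow_add: "bs_eq p (apow a @ apow b) (apow (a + b))"
proof -
  consider "0 \<le> a" "0 \<le> b" | "a < 0" "b < 0" | "0 \<le> a" "b < 0" | "a < 0" "0 \<le> b"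
    by linarith
  then show ?thesis
  proof cases
    case 3
    then have "nat a - nat (- b) = nat (a + b)" "nat (- b) - nat a = nat (- (a + b))"
      by simp_all
    with 3 show ?thesis
      using bs_eq_replicate_cancel[of p "nat a" A "nat (- b)"] by (simp add: apow_eq_replicate)
  next
    case 4
    then have "nat (- a) - nat b = nat (- (a + b))" "nat b - nat (- a) = nat (a + b)"
      by simp_all
    with 4 show ?thesis
      using bs_eq_replicate_cancel[of p "nat (- a)" Ai "nat b"]
      by (cases "0 \<le> a + b") (simp_all add: apow_eq_replicate)
  qed (simp_all add: apow_def replicate_add[symmetric] nat_add_distrib[symmetric] bs_refl)
qed

lemma bs_eq_conj_apow:
  assumes "0 < p"
  shows "bs_eq p (T # apow q @ [Ti]) (apow (int p * q))"
proof (cases "0 \<le> q")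
  case True
  then show ?thesis
    using bs_eq_conj_replicate[OF bs_rel[of p "[]" "[]", simplified], of "nat q"]
    by (simp add: apow_def nat_mult_distrib)
next
  case False
  with assms have "int p * q < 0" "nat (- (int p * q)) = p * nat (- q)"
    by (simp_all add: mult_pos_neg nat_mult_distrib flip: mult_minus_right)
  with False show ?thesis
    using bs_eq_conj_replicate[OF bs_eq_T_Ai_Ti, of p "nat (- q)"] by (simp add: apow_def)
qed

lemma balanced_division:
  fixes j P :: int
  assumes "2 \<le> P"
  obtains q d where "j = P * q + d" "\<bar>d\<bar> \<le> P div 2" "P * \<bar>q\<bar> \<le> \<bar>j\<bar> + P div 2"
proof
  let ?h = "P div 2"
  show "j = P * ((j + ?h) div P) + ((j + ?h) mod P - ?h)"
    using div_mult_mod_eq[of "j + ?h" P] by (simp add: algebra_simps)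
  moreover show "\<bar>(j + ?h) mod P - ?h\<bar> \<le> ?h"
    using assms pos_mod_bound[of P "j + ?h"] pos_mod_sign[of P "j + ?h"] by linarith
  moreover have "\<bar>P * ((j + ?h) div P)\<bar> = P * \<bar>(j + ?h) div P\<bar>"
    using assms by (simp add: abs_mult)
  ultimately show "P * \<bar>(j + ?h) div P\<bar> \<le> \<bar>j\<bar> + ?h"
    by linarith
qed

lemma wlen_le: "bs_eq p u w \<Longrightarrow> wlen p w \<le> length u"
  unfolding wlen_def by (rule Least_le) blast

lemma wlen_le_length: "wlen p w \<le> length w"
  by (rule wlen_le[OF bs_refl])

lemma wlen_witness: obtains u where "bs_eq p u w" "length u = wlen p w"
proof -
  have "\<exists>u. length u = wlen p w \<and> bs_eq p u w"
    unfolding wlen_def by (rule LeastI[of _ "length w"]) (blast intro: bs_refl)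
  then show ?thesis using that by blast
qed

lemma wlen_cong:
  assumes "bs_eq p u v"
  shows "wlen p u = wlen p v"
proof -
  have "wlen p v \<le> wlen p u" if "bs_eq p u v" for u v
    by (metis wlen_le wlen_witness bs_trans that)
  then show ?thesis using assms bs_sym by (metis antisym)
qed

lemma wlen_append_le: "wlen p (u @ v) \<le> wlen p u + wlen p v"
proof -
  obtain u' v' where "bs_eq p u' u" "length u' = wlen p u" "bs_eq p v' v" "length v' = wlen p v"
    by (metis wlen_witness)
  then show ?thesis using wlen_le[OF bs_eq_append] by fastforce
qed

lemma wlen_conj_le: "wlen p (replicate a Ti @ w @ replicate b T) \<le> a + b + wlen p w"
proof -
  have "wlen p (replicate a Ti @ w @ replicate b T)
      \<le> wlen p (replicate a Ti) + (wlen p w + wlen p (replicate b T))"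
    using wlen_append_le[of p "replicate a Ti"] wlen_append_le[of p w] by (meson add_left_mono order_trans)
  also have "\<dots> \<le> a + (wlen p w + b)"
    using wlen_le_length[of p "replicate a Ti"] wlen_le_length[of p "replicate b T"]
    by (intro add_mono) simp_all
  finally show ?thesis by simp
qed

lemma wlen_apow_le:
  assumes "2 \<le> p" and "\<bar>j\<bar> \<le> int p ^ k"
  shows "wlen p (apow j) \<le> (p div 2 + 2) * k + p div 2"
  using assms(2)
proof (induction k arbitrary: j)
  case 0
  moreover have "1 \<le> p div 2" using assms(1) by simp
  ultimately have "nat \<bar>j\<bar> \<le> p div 2" by simp
  then show ?case using wlen_le_length[of p "apow j"] by (simp add: length_apow)
next
  case (Suc k)
  let ?h = "p div 2"
  obtain q d where jqd: "j = int p * q + d" and d: "\<bar>d\<bar> \<le> int ?h"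
    and q: "int p * \<bar>q\<bar> \<le> \<bar>j\<bar> + int ?h"
    using balanced_division[of "int p" j] assms(1) by (auto simp: zdiv_int)
  have "int p * \<bar>q\<bar> < int p * (int p ^ k + 1)"
    using q Suc.prems assms(1) by (simp add: algebra_simps)
  then have "\<bar>q\<bar> \<le> int p ^ k"
    by (simp add: mult_less_cancel_left)
  then have IH: "wlen p (apow q) \<le> (?h + 2) * k + ?h"
    by (rule Suc.IH)
  have "bs_eq p ([T] @ apow q @ [Ti] @ apow d) (apow j)"
    using bs_eq_append[OF bs_eq_conj_apow bs_refl, of p q "apow d"]
      bs_eq_apow_add[of p "int p * q" d] jqd assms(1)
    by (auto intro: bs_trans)
  then have "wlen p (apow j) = wlen p ([T] @ apow q @ [Ti] @ apow d)"
    by (simp add: wlen_cong)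
  also have "\<dots> \<le> wlen p [T] + (wlen p (apow q) + (wlen p [Ti] + wlen p (apow d)))"
    by (meson add_mono order_refl order_trans wlen_append_le)
  also have "\<dots> \<le> 1 + (((?h + 2) * k + ?h) + (1 + ?h))"
    using IH d wlen_le_length[of p "[T]"] wlen_le_length[of p "[Ti]"]
      wlen_le_length[of p "apow d"] by (simp add: length_apow)
  finally show ?case by simp
qed

lemma abs_le_power_ceiling:
  fixes j :: int
  assumes "1 \<le> p" and "real_of_int \<bar>j\<bar> \<le> real p powr x"
  shows "\<bar>j\<bar> \<le> int p ^ nat \<lceil>x\<rceil>"
proof -
  have "real p powr x \<le> real p powr real (nat \<lceil>x\<rceil>)"
    using assms(1) by (intro powr_mono) linarith+
  also have "\<dots> = real p ^ nat \<lceil>x\<rceil>"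
    using assms(1) by (simp add: powr_realpow)
  finally have "real_of_int \<bar>j\<bar> \<le> real_of_int (int p ^ nat \<lceil>x\<rceil>)"
    using assms(2) by simp
  then show ?thesis
    by (simp only: of_int_le_iff)
qed

lemma length_budget_le:
  fixes H B n m s :: real
  assumes "0 \<le> H" and "H + 2 < B" and "1 \<le> n" and "m \<le> n - 1" and "s \<le> n - 1"
  shows "m + s + (H + 2) * nat \<lceil>(B / (H + 2) - 2) * n\<rceil> + H \<le> B * n"
proof -
  define x where "x = B / (H + 2) - 2"
  define k where "k = nat \<lceil>x * n\<rceil>"
  have Bn: "B * n = (H + 2) * (x * n) + 2 * (H * n) + 4 * n"
    using assms(1) unfolding x_def by (simp add: field_simps)
  have Hn: "H \<le> H * n"
    using assms(1,3) by (simp add: mult_le_cancel_left1)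
  have "m + s + (H + 2) * k + H \<le> B * n"
  proof (cases "k = 0")
    case True
    have "(H + 2) * n \<le> B * n"
      using assms(2,3) by (intro mult_right_mono) simp_all
    with True Hn assms(4,5) show ?thesis
      by (simp add: algebra_simps)
  next
    case False
    then have "real k \<le> x * n + 1"
      unfolding k_def by linarith
    then have "(H + 2) * k \<le> (H + 2) * (x * n) + (H + 2)"
      using assms(1) mult_left_mono[of "real k" "x * n + 1" "H + 2"] by (simp add: algebra_simps)
    with Bn Hn assms(3-5) show ?thesis
      by linarith
  qed
  then show ?thesis
    unfolding k_def x_def .
qed

theorem lemma6p3:
  fixes p :: nat and m s n j :: int and B :: real
  assumes "p \<ge> 3"
    and "0 \<le> m" and "m < n" and "0 \<le> s" and "s < n"
    and "real (p div 2) + 2 < B"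
    and "real (wlen p (replicate (nat m) Ti @ apow j @ replicate (nat s) T)) > B * real_of_int n"
  shows "real_of_int \<bar>j\<bar> > real p powr ((B / (real (p div 2) + 2) - 2) * real_of_int n)"
proof (rule ccontr)
  let ?h = "p div 2"
  define k where "k = nat \<lceil>(B / (real ?h + 2) - 2) * real_of_int n\<rceil>"
  assume "\<not> ?thesis"
  then have "\<bar>j\<bar> \<le> int p ^ k"
    unfolding k_def using assms(1) by (intro abs_le_power_ceiling) auto
  then have "wlen p (apow j) \<le> (?h + 2) * k + ?h"
    using assms(1) by (intro wlen_apow_le) simp_all
  then have wlen_w: "wlen p (replicate (nat m) Ti @ apow j @ replicate (nat s) T)
      \<le> nat m + nat s + ((?h + 2) * k + ?h)"
    using wlen_conj_le[of p "nat m" "apow j" "nat s"] by linarith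
  have "real_of_int m + real_of_int s + (real ?h + 2) * k + real ?h \<le> B * real_of_int n"
    unfolding k_def using assms(2-6) by (intro length_budget_le) simp_all
  then show False
    using assms(2,4,7) of_nat_mono[OF wlen_w, where 'a=real] by (simp add: algebra_simps)
qed

end
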